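(* Let $G=G_1\oplus G_2$ be a cograph, where $G_1,G_2$ are nonempty graphs on disjoint vertex sets. Then there is a spanning cactus subgraph $H$ of $G$ with the maximum number of edges (among all spanning cactus subgraphs of $G$) such that every cycle of $H$ is either a $C_3$ or a $C_4$ and contains at least one vertex of $V(G_1)$ and at least one vertex of $V(G_2)$.
   Context: All graphs are finite, simple and undirected. The join $G_1\oplus G_2$ of graphs with disjoint vertex sets has vertex set $V(G_1)\cup V(G_2)$ and edge set $E(G_1)\cup E(G_2)\cup\{uv: u\in V(G_1), v\in V(G_2)\}$. A cograph is a graph with no induced $P_4$ (path on 4 vertices). A cactus is a connected graph in which every edge lies in at most one cycle; a spanning cactus subgraph of $G$ is a subgraph with vertex set $V(G)$ that is a cactus. $C_k$ denotes the cycle on $k$ vertices. *)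

theory Defs
  imports Main
begin

definition simple_graph :: "'a set \<Rightarrow> 'a set set \<Rightarrow> bool" where
  "simple_graph V E \<longleftrightarrow> finite V \<and>
     (\<forall>e\<in>E. \<exists>u v. e = {u, v} \<and> u \<noteq> v \<and> u \<in> V \<and> v \<in> V)"

definition join_edges :: "'a set \<Rightarrow> 'a set set \<Rightarrow> 'a set \<Rightarrow> 'a set set \<Rightarrow> 'a set set" where
  "join_edges V1 E1 V2 E2 = E1 \<union> E2 \<union> {{u, v} | u v. u \<in> V1 \<and> v \<in> V2}"

definition cograph :: "'a set \<Rightarrow> 'a set set \<Rightarrow> bool" where
  "cograph V E \<longleftrightarrow> \<not> (\<exists>a b c d. a \<in> V \<and> b \<in> V \<and> c \<in> V \<and> d \<in> V \<and> distinct [a, b, c, d] \<and>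
      {a, b} \<in> E \<and> {b, c} \<in> E \<and> {c, d} \<in> E \<and>
      {a, c} \<notin> E \<and> {b, d} \<notin> E \<and> {a, d} \<notin> E)"

definition is_cycle :: "'a set set \<Rightarrow> 'a list \<Rightarrow> bool" where
  "is_cycle E cs \<longleftrightarrow> distinct cs \<and> length cs \<ge> 3 \<and>
     (\<forall>i < length cs. {cs ! i, cs ! ((i + 1) mod length cs)} \<in> E)"

definition cycle_edges :: "'a list \<Rightarrow> 'a set set" where
  "cycle_edges cs = {{cs ! i, cs ! ((i + 1) mod length cs)} | i. i < length cs}"

definition connected_graph :: "'a set \<Rightarrow> 'a set set \<Rightarrow> bool" where
  "connected_graph V E \<longleftrightarrow> V \<noteq> {} \<and>
     (\<forall>u\<in>V. \<forall>v\<in>V. (u, v) \<in> {(x, y). {x, y} \<in> E}\<^sup>*)"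

text \<open>Cactus: connected graph in which every edge lies in at most one cycle
  (cycles compared as subgraphs, i.e. via their edge sets).\<close>
definition cactus :: "'a set \<Rightarrow> 'a set set \<Rightarrow> bool" where
  "cactus V E \<longleftrightarrow> simple_graph V E \<and> connected_graph V E \<and>
     (\<forall>e\<in>E. \<forall>cs ds. is_cycle E cs \<and> is_cycle E ds \<and> e \<in> cycle_edges cs \<and> e \<in> cycle_edges ds
        \<longrightarrow> cycle_edges cs = cycle_edges ds)"

definition spanning_cactus :: "'a set \<Rightarrow> 'a set set \<Rightarrow> 'a set set \<Rightarrow> bool" where
  "spanning_cactus V E F \<longleftrightarrow> F \<subseteq> E \<and> cactus V F"

end

theory Submission
  imports Defs
begin

text \<open>Start from a spanning cactus with the maximum number of edges and destroy its bad cycles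
  (those that are not a \<open>C\<^sub>3\<close> or \<open>C\<^sub>4\<close> meeting both sides) one at a time. Once the edges of
  a cycle of a cactus are deleted, its vertices lie in different components; hence the cycle can
  be traded for any subgraph on its vertices that is connected, has only one cycle and has at
  least as many edges. We take a crossing triangle or square and attach every remaining vertex of
  the old cycle as a leaf by a cross edge. If the bad cycle has an edge inside one side, a triangle
  on that edge and a vertex of the other side does it; that vertex is on the cycle or is reached
  from a cycle vertex off the cycle, and then replaces that cycle vertex. Otherwise the cycle
  alternates between the sides and is longer than 4, and four consecutive vertices span a
  crossing square. The number of bad cycles drops and the number of edges does not, so the
  process ends in a maximum spanning cactus without bad cycles.\<close>

fun path_edges :: "'a list \<Rightarrow> 'a set set" where
  "path_edges (x # y # xs) = insert {x, y} (path_edges (y # xs))"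
| "path_edges _ = {}"

lemma path_edges_conv_nth: "path_edges xs = (\<lambda>i. {xs ! i, xs ! Suc i}) ` {i. Suc i < length xs}"
proof (induction xs rule: path_edges.induct)
  case (1 x y xs)
  have "{i. Suc i < length (x # y # xs)} = insert 0 (Suc ` {i. Suc i < length (y # xs)})"
    by (auto simp: image_iff gr0_conv_Suc) (metis Suc_less_SucD not0_implies_Suc)
  then show ?case using 1 by (simp only: image_insert image_image) simp
qed auto

lemma path_edges_Cons: "xs \<noteq> [] \<Longrightarrow> path_edges (x # xs) = insert {x, hd xs} (path_edges xs)"
  by (cases xs) auto

lemma path_edges_append: "path_edges (xs @ y # ys) = path_edges (xs @ [y]) \<union> path_edges (y # ys)"
  by (induction xs rule: path_edges.induct) (auto simp: path_edges_Cons)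

lemma path_edges_snoc: "xs \<noteq> [] \<Longrightarrow> path_edges (xs @ [y]) = insert {last xs, y} (path_edges xs)"
  by (induction xs rule: path_edges.induct) auto

lemma path_edges_append_subset: "path_edges xs \<subseteq> path_edges (xs @ ys)"
  by (induction xs rule: path_edges.induct) auto

lemma cycle_edges_conv_path_edges:
  assumes "cs \<noteq> []"
  shows "cycle_edges cs = insert {last cs, hd cs} (path_edges cs)"
proof -
  obtain n where n: "length cs = Suc n" using assms by (cases cs) auto
  let ?f = "\<lambda>i. {cs ! i, cs ! ((i + 1) mod length cs)}"
  have "cycle_edges cs = ?f ` {..<Suc n}" unfolding cycle_edges_def n by auto
  also have "\<dots> = insert (?f n) (?f ` {..<n})" by (simp only: lessThan_Suc image_insert)
  also have "?f n = {last cs, hd cs}" using n assms by (simp add: last_conv_nth hd_conv_nth insert_commute)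
  also have "?f ` {..<n} = path_edges cs" unfolding path_edges_conv_nth using n by auto
  finally show ?thesis .
qed

lemma cycle_edges_split:
  "cycle_edges (x # xs @ y # ys) = path_edges (x # xs @ [y]) \<union> path_edges (y # ys @ [x])"
proof -
  have "cycle_edges (x # xs @ y # ys) = insert {last (y # ys), x} (path_edges (x # xs @ y # ys))"
    using cycle_edges_conv_path_edges[of "x # xs @ y # ys"] by simp
  also have "\<dots> = path_edges (x # xs @ [y]) \<union> insert {last (y # ys), x} (path_edges (y # ys))"
    using path_edges_append[of "x # xs" y ys] by simp
  also have "insert {last (y # ys), x} (path_edges (y # ys)) = path_edges (y # ys @ [x])"
    using path_edges_snoc[of "y # ys" x] by simp
  finally show ?thesis .
qed

lemma cycle_edges_rotate1: "cycle_edges (rotate1 cs) = cycle_edges cs"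
proof (cases cs)
  case (Cons x xs)
  show ?thesis
  proof (cases xs)
    case (Cons y ys)
    have "cycle_edges (y # ys @ x # []) = cycle_edges (x # [] @ y # ys)"
      unfolding cycle_edges_split by (simp only: Un_commute append_Nil)
    then show ?thesis using \<open>cs = x # xs\<close> Cons by simp
  qed (simp add: \<open>cs = x # xs\<close>)
qed simp

lemma cycle_edges_rotate: "cycle_edges (rotate n cs) = cycle_edges cs"
  by (induction n) (auto simp: cycle_edges_rotate1)

lemma is_cycle_iff_edges: "is_cycle E cs \<longleftrightarrow> distinct cs \<and> 3 \<le> length cs \<and> cycle_edges cs \<subseteq> E"
  unfolding is_cycle_def cycle_edges_def by blast

lemma finite_cycle_edges: "finite (cycle_edges cs)"
  unfolding cycle_edges_def by simp

lemma Union_cycle_edges: "\<Union>(cycle_edges cs) = set cs"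
proof
  show "\<Union>(cycle_edges cs) \<subseteq> set cs"
  proof
    fix x assume "x \<in> \<Union>(cycle_edges cs)"
    then obtain i where i: "i < length cs" "x \<in> {cs ! i, cs ! ((i + 1) mod length cs)}"
      unfolding cycle_edges_def by blast
    have "0 < length cs" using i(1) by linarith
    then have "(i + 1) mod length cs < length cs" by simp
    then show "x \<in> set cs" using i by auto
  qed
  show "set cs \<subseteq> \<Union>(cycle_edges cs)"
  proof
    fix x assume "x \<in> set cs"
    then obtain i where i: "i < length cs" "cs ! i = x" by (auto simp: in_set_conv_nth)
    then have "{cs ! i, cs ! ((i + 1) mod length cs)} \<in> cycle_edges cs"
      unfolding cycle_edges_def by blast
    then show "x \<in> \<Union>(cycle_edges cs)" using i by blast
  qed
qed

lemma nth_edge_in_cycle_edges: "Suc k < length cs \<Longrightarrow> {cs ! k, cs ! Suc k} \<in> cycle_edges cs"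
  unfolding cycle_edges_def by (intro CollectI exI[of _ k]) simp

lemma card_cycle_edges:
  assumes "distinct cs" "3 \<le> length cs"
  shows "card (cycle_edges cs) = length cs"
proof -
  let ?L = "length cs"
  let ?f = "\<lambda>i. {cs ! i, cs ! (Suc i mod ?L)}"
  have "inj_on ?f {..<?L}"
  proof
    fix i j assume i: "i \<in> {..<?L}" and j: "j \<in> {..<?L}" and eq: "?f i = ?f j"
    have idx: "cs ! a = cs ! b \<longleftrightarrow> a = b" if "a < ?L" "b < ?L" for a b
      using assms(1) that by (simp add: nth_eq_iff_index_eq)
    have suc: "Suc k mod ?L < ?L" for k using assms(2) by (intro mod_less_divisor) linarith
    show "i = j"
    proof (rule ccontr)
      assume "i \<noteq> j"
      with eq have "i = Suc j mod ?L" "j = Suc i mod ?L"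
        using i j idx suc by (auto simp: doubleton_eq_iff)
      then have "Suc (Suc i) mod ?L = i mod ?L" using i by (simp add: mod_Suc_eq)
      then have "?L dvd 2" using mod_eq_dvd_iff_nat[of i "Suc (Suc i)" ?L] by simp
      then have "?L \<le> 2" by (rule dvd_imp_le) simp
      then show False using assms(2) by linarith
    qed
  qed
  moreover have "cycle_edges cs = ?f ` {..<?L}" unfolding cycle_edges_def by auto
  ultimately show ?thesis by (simp add: card_image)
qed

lemma ex_rotate_hd: "x \<in> set cs \<Longrightarrow> \<exists>n. hd (rotate n cs) = x"
  by (metis hd_rotate_conv_nth in_set_conv_nth length_pos_if_in_set list.size(3) mod_less
      not_less_zero)

lemma ex_rotate_closing_edge:
  assumes "e \<in> cycle_edges cs"
  shows "\<exists>n. {last (rotate n cs), hd (rotate n cs)} = e"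
proof -
  obtain i where i: "i < length cs" "e = {cs ! i, cs ! (Suc i mod length cs)}"
    using assms unfolding cycle_edges_def by auto
  let ?r = "rotate (Suc i) cs"
  have ne: "cs \<noteq> []" using i(1) by auto
  have "last ?r = ?r ! (length cs - 1)" using ne by (simp add: last_conv_nth)
  also have "\<dots> = cs ! ((Suc i + (length cs - 1)) mod length cs)"
    using ne nth_rotate[of "length cs - 1" cs "Suc i"] by simp
  also have "(Suc i + (length cs - 1)) mod length cs = i"
  proof -
    have "Suc i + (length cs - 1) = i + length cs" using i(1) by linarith
    then show ?thesis using i(1) by simp
  qed
  finally have "last ?r = cs ! i" .
  moreover have "hd ?r = cs ! (Suc i mod length cs)" by (rule hd_rotate_conv_nth[OF ne])
  ultimately have "{last ?r, hd ?r} = e" using i(2) by (simp only:)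
  then show ?thesis by blast
qed

lemma last_hd_in_cycle_edges: "cs \<noteq> [] \<Longrightarrow> {last cs, hd cs} \<in> cycle_edges cs"
  by (simp add: cycle_edges_conv_path_edges)

lemma cycle_vertex_two_neighbours:
  assumes "is_cycle E cs" "x \<in> set cs"
  shows "\<exists>y z. y \<noteq> z \<and> {x, y} \<in> E \<and> {x, z} \<in> E"
proof -
  obtain n where n: "hd (rotate n cs) = x" using ex_rotate_hd[OF assms(2)] by blast
  let ?r = "rotate n cs"
  have "distinct ?r" "3 \<le> length ?r" "cycle_edges ?r \<subseteq> E"
    using assms(1) by (auto simp: is_cycle_iff_edges cycle_edges_rotate)
  moreover obtain y ys where r: "?r = x # y # ys" using n \<open>3 \<le> length ?r\<close>
    by (cases ?r; cases "tl ?r") auto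
  ultimately have "y \<noteq> last ?r" "{x, y} \<in> E" "{x, last ?r} \<in> E"
    using nth_edge_in_cycle_edges[of 0 ?r] last_hd_in_cycle_edges[of ?r]
    by (auto simp: r insert_commute)
  then show ?thesis by blast
qed

lemma cycle_edge_endpoints:
  assumes "{x, y} \<in> cycle_edges cs" "distinct cs" "3 \<le> length cs"
  shows "x \<noteq> y \<and> x \<in> set cs \<and> y \<in> set cs"
proof -
  obtain i where i: "i < length cs" "{x, y} = {cs ! i, cs ! (Suc i mod length cs)}"
    using assms(1) unfolding cycle_edges_def by auto
  have "Suc i mod length cs \<noteq> i \<and> Suc i mod length cs < length cs"
  proof (cases "Suc i < length cs")
    case False
    then have "Suc i = length cs" using i(1) by linarith
    then show ?thesis using assms(3) by auto
  qed simp
  then have "cs ! i \<noteq> cs ! (Suc i mod length cs)"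
    using assms(2) i(1) by (simp add: nth_eq_iff_index_eq)
  then have "x \<noteq> y" using i(2) by (metis doubleton_eq_iff)
  moreover have "x \<in> set cs" "y \<in> set cs"
    using assms(1) Union_cycle_edges[of cs] by blast+
  ultimately show ?thesis by simp
qed

lemma cycle_in_cycle_edges:
  assumes "is_cycle (cycle_edges ks) ds" "distinct ks" "length ks \<le> length ds"
  shows "cycle_edges ds = cycle_edges ks"
proof -
  have ds: "distinct ds" "3 \<le> length ds" "cycle_edges ds \<subseteq> cycle_edges ks"
    using assms(1) by (auto simp: is_cycle_iff_edges)
  have "set ds \<subseteq> set ks" using ds(3) by (metis Union_cycle_edges Union_mono)
  then have "length ds \<le> length ks"
    using ds(1) assms(2) by (metis card_mono distinct_card finite_set)
  then have "card (cycle_edges ds) = card (cycle_edges ks)"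
    using card_cycle_edges[of ds] card_cycle_edges[of ks] ds(1,2) assms(2,3) by simp
  then show ?thesis using ds(3) by (simp add: card_subset_eq finite_cycle_edges)
qed

lemma cycle_edges_triangle: "cycle_edges [a, b, c] = {{a, b}, {b, c}, {c, a}}"
  by (simp add: cycle_edges_conv_path_edges insert_commute)

lemma cycle_edges_square: "cycle_edges [a, b, c, d] = {{a, b}, {b, c}, {c, d}, {d, a}}"
  by (simp add: cycle_edges_conv_path_edges insert_commute)

lemma crossing_cycle_not_triangle:
  assumes "\<forall>p q. {p, q} \<in> K \<longrightarrow> (p \<in> X) \<noteq> (q \<in> X)" "is_cycle K ds"
  shows "length ds \<noteq> 3"
proof
  assume "length ds = 3"
  then obtain a b c where "ds = [a, b, c]"
    by (cases ds; cases "tl ds"; cases "tl (tl ds)") auto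
  then have "{a, b} \<in> K" "{b, c} \<in> K" "{c, a} \<in> K"
    using assms(2) by (auto simp: is_cycle_iff_edges cycle_edges_triangle)
  then show False using assms(1) by blast
qed

abbreviation edge_rel :: "'a set set \<Rightarrow> ('a \<times> 'a) set" where
  "edge_rel F \<equiv> {(x, y). {x, y} \<in> F}"

lemma edge_rel_rtrancl_sym: "(x, y) \<in> (edge_rel F)\<^sup>* \<Longrightarrow> (y, x) \<in> (edge_rel F)\<^sup>*"
proof -
  have "sym (edge_rel F)" by (auto simp: sym_def insert_commute)
  then have "sym ((edge_rel F)\<^sup>*)" by (rule sym_rtrancl)
  then show "(x, y) \<in> (edge_rel F)\<^sup>* \<Longrightarrow> (y, x) \<in> (edge_rel F)\<^sup>*" by (auto simp: sym_def)
qed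

lemma edge_rel_rtrancl_mono: "(x, y) \<in> (edge_rel F)\<^sup>* \<Longrightarrow> F \<subseteq> F' \<Longrightarrow> (x, y) \<in> (edge_rel F')\<^sup>*"
proof -
  assume "(x, y) \<in> (edge_rel F)\<^sup>*" "F \<subseteq> F'"
  moreover have "edge_rel F \<subseteq> edge_rel F'" using \<open>F \<subseteq> F'\<close> by auto
  ultimately show ?thesis using rtrancl_mono by blast
qed

lemma path_edges_walk: "path_edges p \<subseteq> A \<Longrightarrow> p \<noteq> [] \<Longrightarrow> (hd p, last p) \<in> (edge_rel A)\<^sup>*"
proof (induction p rule: path_edges.induct)
  case (1 x y xs)
  then have "(y, last (y # xs)) \<in> (edge_rel A)\<^sup>*" "(x, y) \<in> edge_rel A" by simp_all
  then show ?case by (simp add: converse_rtrancl_into_rtrancl)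
qed auto

lemma ex_walk:
  assumes "(x, y) \<in> (edge_rel A)\<^sup>*"
  shows "\<exists>p. p \<noteq> [] \<and> hd p = x \<and> last p = y \<and> path_edges p \<subseteq> A"
  using assms
proof (induction rule: rtrancl_induct)
  case base then show ?case by (intro exI[of _ "[x]"]) simp
next
  case (step y z)
  then obtain p where "p \<noteq> []" "hd p = x" "last p = y" "path_edges p \<subseteq> A" by blast
  then show ?case using step(2) by (intro exI[of _ "p @ [z]"]) (simp add: path_edges_snoc)
qed

lemma cycle_vertices_connected:
  assumes "x \<in> set ks" "y \<in> set ks"
  shows "(x, y) \<in> (edge_rel (cycle_edges ks))\<^sup>*"
proof -
  have from_hd: "(hd ks, z) \<in> (edge_rel (cycle_edges ks))\<^sup>*" if "z \<in> set ks" for z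
  proof -
    obtain i where i: "i < length ks" "ks ! i = z" using \<open>z \<in> set ks\<close> by (auto simp: in_set_conv_nth)
    let ?p = "take (Suc i) ks"
    have "path_edges ?p \<subseteq> path_edges ks"
      using path_edges_append_subset[of ?p "drop (Suc i) ks"] by simp
    also have "\<dots> \<subseteq> cycle_edges ks"
      using i(1) cycle_edges_conv_path_edges[of ks] by (cases ks) auto
    finally have "(hd ?p, last ?p) \<in> (edge_rel (cycle_edges ks))\<^sup>*"
      using i(1) by (intro path_edges_walk) auto
    moreover have "hd ?p = hd ks" "last ?p = z"
      using i by (simp, simp add: take_Suc_conv_app_nth)
    ultimately show ?thesis by simp
  qed
  show ?thesis
    using edge_rel_rtrancl_sym[OF from_hd[OF assms(1)]] from_hd[OF assms(2)] by (rule rtrancl_trans)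
qed

definition unique_cycle_per_edge :: "'a set set \<Rightarrow> bool" where
  "unique_cycle_per_edge H \<longleftrightarrow> (\<forall>e\<in>H. \<forall>cs ds. is_cycle H cs \<and> is_cycle H ds \<and>
     e \<in> cycle_edges cs \<and> e \<in> cycle_edges ds \<longrightarrow> cycle_edges cs = cycle_edges ds)"

lemma cactus_iff: "cactus V H \<longleftrightarrow> simple_graph V H \<and> connected_graph V H \<and> unique_cycle_per_edge H"
  unfolding cactus_def unique_cycle_per_edge_def by simp

lemma unique_cycle_per_edge_mono:
  assumes "unique_cycle_per_edge H" "A \<subseteq> H"
  shows "unique_cycle_per_edge A"
  using assms unfolding unique_cycle_per_edge_def is_cycle_iff_edges by blast

lemma path_edges_shortcut: "path_edges (xs @ y # zs) \<subseteq> path_edges (xs @ y # ys @ y # zs)"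
  using path_edges_append[of xs y zs] path_edges_append[of xs y "ys @ y # zs"]
    path_edges_append[of "y # ys" y zs] by auto

lemma ex_path_between:
  assumes "(s, t) \<in> (edge_rel A)\<^sup>*" "s \<in> S" "t \<in> S" "s \<noteq> t"
  shows "\<exists>s' t' mid. s' \<in> S \<and> t' \<in> S \<and> s' \<noteq> t' \<and> distinct mid \<and> set mid \<inter> S = {} \<and>
    path_edges (s' # mid @ [t']) \<subseteq> A"
proof -
  obtain p where p: "p \<noteq> []" "hd p = s" "last p = t" "path_edges p \<subseteq> A"
    using ex_walk[OF assms(1)] by blast
  obtain ys where ys: "p = ys @ [t]" using p(1,3) by (metis append_butlast_last_id)
  then have "ys \<noteq> []" using p(2) assms(4) by auto
  then obtain mid where "p = s # mid @ [t]" using p(2) ys by (cases ys) auto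
  with p(4) have "path_edges (s # mid @ [t]) \<subseteq> A" by simp
  with assms(2-4) show ?thesis
  proof (induction "length mid" arbitrary: s t mid rule: less_induct)
    case less
    consider (meets) x m1 m2 where "mid = m1 @ x # m2" "x \<in> S"
      | (repeats) y m1 m2 m3 where "mid = m1 @ [y] @ m2 @ [y] @ m3"
      | (path) "distinct mid" "set mid \<inter> S = {}"
    proof (cases "distinct mid \<and> set mid \<inter> S = {}")
      case False
      then show thesis using that(1,2) by (metis disjoint_iff not_distinct_decomp split_list)
    qed (use that(3) in blast)
    then show ?case
    proof cases
      case meets
      have "path_edges ((s # m1) @ x # m2 @ [t]) \<subseteq> A" using less.prems(4) meets(1) by simp
      then have "path_edges (s # m1 @ [x]) \<subseteq> A" "path_edges (x # m2 @ [t]) \<subseteq> A"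
        using path_edges_append[of "s # m1" x "m2 @ [t]"] by auto
      then show ?thesis
        using less.hyps[of m1 s x] less.hyps[of m2 s t] less.prems(1-3) meets
        by (cases "x = s") auto
    next
      case repeats
      have "path_edges ((s # m1) @ y # m3 @ [t]) \<subseteq> A"
        using less.prems(4) repeats path_edges_shortcut[of "s # m1" y "m3 @ [t]" m2] by auto
      then show ?thesis using less.hyps[of "m1 @ y # m3" s t] less.prems(1-3) repeats by auto
    qed (use less.prems in blast)
  qed
qed

text \<open>A shortest connection outside the cycle, closed up by an arc of the cycle, would be a
  second cycle through an edge of the first.\<close>
lemma cycle_vertices_not_connected_outside:
  assumes uniq: "unique_cycle_per_edge H" and cyc: "is_cycle H cs"
    and st: "s \<in> set cs" "t \<in> set cs" "s \<noteq> t"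
  shows "(s, t) \<notin> (edge_rel (H - cycle_edges cs))\<^sup>*"
proof
  assume "(s, t) \<in> (edge_rel (H - cycle_edges cs))\<^sup>*"
  then obtain s' t' mid where path: "s' \<in> set cs" "t' \<in> set cs" "s' \<noteq> t'" "distinct mid"
      "set mid \<inter> set cs = {}" "path_edges (s' # mid @ [t']) \<subseteq> H - cycle_edges cs"
    using ex_path_between st by metis
  obtain k where "hd (rotate k cs) = t'" using ex_rotate_hd[OF path(2)] by blast
  moreover have r: "distinct (rotate k cs)" "3 \<le> length (rotate k cs)" "set (rotate k cs) = set cs"
    "cycle_edges (rotate k cs) = cycle_edges cs"
    using cyc by (auto simp: is_cycle_iff_edges cycle_edges_rotate)
  ultimately obtain rest where "rotate k cs = t' # rest" by (cases "rotate k cs") auto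
  moreover have "s' \<in> set rest" using path(1,3) r(3) calculation by auto
  ultimately obtain ys zs where rot: "rotate k cs = t' # ys @ s' # zs" by (metis split_list)
  define D where "D = t' # ys @ s' # mid"
  have arc: "path_edges (t' # ys @ [s']) \<subseteq> cycle_edges cs"
    using r(4) cycle_edges_split[of t' ys s' zs] unfolding rot by blast
  have D_edges: "cycle_edges D = path_edges (t' # ys @ [s']) \<union> path_edges (s' # mid @ [t'])"
    unfolding D_def by (rule cycle_edges_split)
  have "distinct D" using r(1,3) path(4,5) unfolding D_def rot by auto
  moreover have "3 \<le> length D"
  proof (rule ccontr)
    assume "\<not> 3 \<le> length D"
    moreover have "length D = 2 + length ys + length mid" unfolding D_def by simp
    ultimately have "length ys + length mid = 0" by linarith
    then have "ys = []" "mid = []" by simp_all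
    then show False using arc path(6) by (auto simp: insert_commute)
  qed
  moreover have "cycle_edges D \<subseteq> H" using D_edges arc path(6) cyc by (auto simp: is_cycle_iff_edges)
  ultimately have "is_cycle H D" by (simp add: is_cycle_iff_edges)
  moreover have "{t', hd (ys @ [s'])} \<in> path_edges (t' # ys @ [s'])" by (simp add: path_edges_Cons)
  ultimately have "cycle_edges D = cycle_edges cs"
    using uniq cyc arc D_edges unfolding unique_cycle_per_edge_def is_cycle_iff_edges by blast
  moreover have "{s', hd (mid @ [t'])} \<in> path_edges (s' # mid @ [t'])" by (simp add: path_edges_Cons)
  ultimately show False using D_edges path(6) by blast
qed

lemma reachable_avoiding_cycle_edges:
  assumes "(u, w) \<in> (edge_rel H)\<^sup>*" "u \<in> set cs"
  shows "\<exists>s\<in>set cs. (s, w) \<in> (edge_rel (H - cycle_edges cs))\<^sup>*"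
  using assms(1)
proof (induction rule: rtrancl_induct)
  case (step y z)
  then obtain s where s: "s \<in> set cs" "(s, y) \<in> (edge_rel (H - cycle_edges cs))\<^sup>*" by blast
  show ?case
  proof (cases "{y, z} \<in> cycle_edges cs")
    case True
    then have "z \<in> set cs" using Union_cycle_edges[of cs] by blast
    then show ?thesis by blast
  next
    case False
    then have "(y, z) \<in> edge_rel (H - cycle_edges cs)" using step(2) by simp
    then show ?thesis using s by (meson rtrancl.rtrancl_into_rtrancl)
  qed
qed (use assms(2) in blast)

lemma separated_move_vertex:
  assumes sep: "\<forall>s\<in>S. \<forall>t\<in>S. s \<noteq> t \<longrightarrow> (s, t) \<notin> (edge_rel A)\<^sup>*"
    and s0: "s0 \<in> S" "(s0, v) \<in> (edge_rel A)\<^sup>*"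
    and xy: "x \<in> insert v (S - {s0})" "y \<in> insert v (S - {s0})" "x \<noteq> y"
  shows "(x, y) \<notin> (edge_rel A)\<^sup>*"
proof
  assume "(x, y) \<in> (edge_rel A)\<^sup>*"
  moreover have "(v, s0) \<in> (edge_rel A)\<^sup>*" using s0(2) by (rule edge_rel_rtrancl_sym)
  ultimately have "(if x = v then s0 else x, if y = v then s0 else y) \<in> (edge_rel A)\<^sup>*"
    using s0(2) by (auto intro: rtrancl_trans)
  then show False using sep s0(1) xy by (auto split: if_splits)
qed

lemma ex_walk_to_Union:
  assumes "path_edges (y # ys) \<subseteq> A \<union> N" "last (y # ys) \<in> \<Union>N"
  shows "\<exists>z\<in>set (y # ys). z \<in> \<Union>N \<and> (y, z) \<in> (edge_rel A)\<^sup>*"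
  using assms
proof (induction ys arbitrary: y)
  case (Cons y' ys)
  show ?case
  proof (cases "y \<in> \<Union>N")
    case False
    then have "(y, y') \<in> edge_rel A" using Cons.prems(1) by auto
    moreover have "path_edges (y' # ys) \<subseteq> A \<union> N" "last (y' # ys) \<in> \<Union>N" using Cons.prems by auto
    then obtain z where "z \<in> set (y' # ys)" "z \<in> \<Union>N" "(y', z) \<in> (edge_rel A)\<^sup>*"
      using Cons.IH by blast
    ultimately show ?thesis by (meson converse_rtrancl_into_rtrancl list.set_intros(2))
  qed auto
qed auto

text \<open>The first \<open>A\<close>-edge of the path would start an \<open>A\<close>-walk between two vertices of \<open>N\<close>.\<close>
lemma separated_path_edges_subset:
  assumes sep: "\<forall>x\<in>\<Union>N. \<forall>y\<in>\<Union>N. x \<noteq> y \<longrightarrow> (x, y) \<notin> (edge_rel A)\<^sup>*"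
  shows "distinct p \<Longrightarrow> path_edges p \<subseteq> A \<union> N \<Longrightarrow> hd p \<in> \<Union>N \<Longrightarrow> last p \<in> \<Union>N \<Longrightarrow>
    path_edges p \<subseteq> N"
proof (induction p rule: path_edges.induct)
  case (1 x y ys)
  show ?case
  proof (cases "{x, y} \<in> N")
    case True
    then show ?thesis using 1 by auto
  next
    case False
    then have "(x, y) \<in> edge_rel A" using "1.prems"(2) by auto
    moreover obtain z where "z \<in> set (y # ys)" "z \<in> \<Union>N" "(y, z) \<in> (edge_rel A)\<^sup>*"
      using ex_walk_to_Union[of y ys A N] "1.prems" by auto
    ultimately have "(x, z) \<in> (edge_rel A)\<^sup>*" by (meson converse_rtrancl_into_rtrancl)
    moreover have "x \<noteq> z" using "1.prems"(1) \<open>z \<in> set (y # ys)\<close> by auto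
    ultimately show ?thesis using sep "1.prems"(3) \<open>z \<in> \<Union>N\<close> by auto
  qed
qed auto

lemma cycle_in_separated_union:
  assumes sep: "\<forall>x\<in>\<Union>N. \<forall>y\<in>\<Union>N. x \<noteq> y \<longrightarrow> (x, y) \<notin> (edge_rel A)\<^sup>*"
    and cyc: "is_cycle (A \<union> N) ds"
  shows "cycle_edges ds \<subseteq> N \<or> cycle_edges ds \<subseteq> A"
proof (rule disjCI)
  assume "\<not> cycle_edges ds \<subseteq> A"
  then obtain e where e: "e \<in> cycle_edges ds" "e \<in> N" using cyc by (auto simp: is_cycle_iff_edges)
  obtain n where n: "{last (rotate n ds), hd (rotate n ds)} = e"
    using ex_rotate_closing_edge[OF e(1)] by blast
  let ?r = "rotate n ds"
  have r: "distinct ?r" "?r \<noteq> []" "cycle_edges ?r = cycle_edges ds" "cycle_edges ?r \<subseteq> A \<union> N"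
    using cyc by (auto simp: is_cycle_iff_edges cycle_edges_rotate)
  then have "cycle_edges ?r = insert e (path_edges ?r)" using n by (simp add: cycle_edges_conv_path_edges)
  moreover have "path_edges ?r \<subseteq> N"
    using separated_path_edges_subset[OF sep r(1)] r(4) n e(2) calculation by auto
  ultimately show "cycle_edges ds \<subseteq> N" using r(3) e(2) by auto
qed

lemma simple_graph_edges_Pow:
  assumes "simple_graph V G"
  shows "G \<subseteq> Pow V"
proof
  fix e assume "e \<in> G"
  then obtain u v where "e = {u, v}" "u \<in> V" "v \<in> V" using assms unfolding simple_graph_def by blast
  then show "e \<in> Pow V" by simp
qed

lemma simple_graph_finite_edges: "simple_graph V G \<Longrightarrow> finite G"
  by (meson finite_Pow_iff finite_subset simple_graph_def simple_graph_edges_Pow)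

lemma simple_graph_mono: "simple_graph V G \<Longrightarrow> F \<subseteq> G \<Longrightarrow> simple_graph V F"
  unfolding simple_graph_def by blast

lemma cycle_vertices_subset:
  assumes "simple_graph V G" "is_cycle G cs"
  shows "set cs \<subseteq> V"
proof -
  have "cycle_edges cs \<subseteq> Pow V" using assms simple_graph_edges_Pow by (auto simp: is_cycle_iff_edges)
  then show ?thesis by (auto simp flip: Union_cycle_edges)
qed

lemma unique_cycle_per_edge_separated_union:
  assumes uniq: "unique_cycle_per_edge A" and disj: "A \<inter> N = {}"
    and sep: "\<forall>x\<in>\<Union>N. \<forall>y\<in>\<Union>N. x \<noteq> y \<longrightarrow> (x, y) \<notin> (edge_rel A)\<^sup>*"
    and Ncyc: "\<forall>ds. is_cycle N ds \<longrightarrow> cycle_edges ds = K"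
  shows "unique_cycle_per_edge (A \<union> N)"
  unfolding unique_cycle_per_edge_def
proof (intro ballI allI impI)
  fix e c1 c2 assume "is_cycle (A \<union> N) c1 \<and> is_cycle (A \<union> N) c2 \<and> e \<in> cycle_edges c1 \<and> e \<in> cycle_edges c2"
  then have c: "is_cycle (A \<union> N) c1" "is_cycle (A \<union> N) c2" "e \<in> cycle_edges c1" "e \<in> cycle_edges c2"
    by auto
  have split: "cycle_edges c \<subseteq> N \<or> cycle_edges c \<subseteq> A" if "is_cycle (A \<union> N) c" for c
    using cycle_in_separated_union[OF sep that] .
  consider (N) "cycle_edges c1 \<subseteq> N" "cycle_edges c2 \<subseteq> N"
    | (A) "cycle_edges c1 \<subseteq> A" "cycle_edges c2 \<subseteq> A"
    | (mixed) "e \<in> A \<inter> N"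
    using split[OF c(1)] split[OF c(2)] c(3,4) by blast
  then show "cycle_edges c1 = cycle_edges c2"
  proof cases
    case N
    then have "is_cycle N c1" "is_cycle N c2" using c(1,2) by (auto simp: is_cycle_iff_edges)
    then show ?thesis using Ncyc by simp
  next
    case A
    then have "is_cycle A c1" "is_cycle A c2" "e \<in> A" using c by (auto simp: is_cycle_iff_edges)
    then show ?thesis using uniq c(3,4) unfolding unique_cycle_per_edge_def by blast
  qed (use disj in blast)
qed

lemma connected_replace_cycle:
  assumes sH: "simple_graph V H" and conH: "connected_graph V H" and cyc: "is_cycle H cs"
    and v: "\<forall>x\<in>\<Union>N. (v, x) \<in> (edge_rel N)\<^sup>*"
    and cover: "\<forall>s\<in>set cs. \<exists>x\<in>\<Union>N. (s, x) \<in> (edge_rel (H - cycle_edges cs))\<^sup>*"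
  shows "connected_graph V (H - cycle_edges cs \<union> N)"
proof -
  let ?A = "H - cycle_edges cs" and ?H' = "H - cycle_edges cs \<union> N"
  have "cs \<noteq> []" using cyc by (auto simp: is_cycle_iff_edges)
  then have c0: "hd cs \<in> set cs" "hd cs \<in> V" using cycle_vertices_subset[OF sH cyc] by auto
  have reach: "(v, u) \<in> (edge_rel ?H')\<^sup>*" if "u \<in> V" for u
  proof -
    have "(hd cs, u) \<in> (edge_rel H)\<^sup>*" using conH c0(2) that unfolding connected_graph_def by blast
    then have "\<exists>s\<in>set cs. (s, u) \<in> (edge_rel ?A)\<^sup>*"
      using c0(1) by (rule reachable_avoiding_cycle_edges)
    then obtain s where s: "s \<in> set cs" "(s, u) \<in> (edge_rel ?A)\<^sup>*" by blast
    then obtain x where x: "x \<in> \<Union>N" "(s, x) \<in> (edge_rel ?A)\<^sup>*" using cover by blast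
    have sub: "N \<subseteq> ?H'" "?A \<subseteq> ?H'" by blast+
    have "(v, x) \<in> (edge_rel ?H')\<^sup>*" using edge_rel_rtrancl_mono[OF _ sub(1)] v x(1) by blast
    also have "(x, s) \<in> (edge_rel ?H')\<^sup>*"
      using edge_rel_rtrancl_mono[OF edge_rel_rtrancl_sym[OF x(2)] sub(2)] .
    also have "(s, u) \<in> (edge_rel ?H')\<^sup>*" using edge_rel_rtrancl_mono[OF s(2) sub(2)] .
    finally show ?thesis .
  qed
  show ?thesis
    unfolding connected_graph_def
  proof (intro conjI ballI)
    show "V \<noteq> {}" using c0 by blast
    fix u w assume "u \<in> V" "w \<in> V"
    then show "(u, w) \<in> (edge_rel ?H')\<^sup>*"
      using edge_rel_rtrancl_sym[OF reach[of u]] reach[of w] by (meson rtrancl_trans)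
  qed
qed

lemma card_replace_cycle:
  assumes "finite H" "is_cycle H cs" "finite N" "(H - cycle_edges cs) \<inter> N = {}" "length cs \<le> card N"
  shows "card H \<le> card (H - cycle_edges cs \<union> N)"
proof -
  have C: "cycle_edges cs \<subseteq> H" "card (cycle_edges cs) = length cs"
    using assms(2) card_cycle_edges by (auto simp: is_cycle_iff_edges)
  have "card H = card (H - cycle_edges cs) + length cs"
    using C card_Diff_subset[OF finite_cycle_edges C(1)] card_mono[OF assms(1) C(1)] by simp
  also have "\<dots> \<le> card (H - cycle_edges cs \<union> N)"
    using assms(1,3-5) by (simp add: card_Un_disjoint)
  finally show ?thesis .
qed

lemma cactus_replace_cycle:
  assumes sg: "simple_graph V G" and sc: "spanning_cactus V G H" and cyc: "is_cycle H cs"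
    and NG: "N \<subseteq> G"
    and sep: "\<forall>x\<in>\<Union>N. \<forall>y\<in>\<Union>N. x \<noteq> y \<longrightarrow> (x, y) \<notin> (edge_rel (H - cycle_edges cs))\<^sup>*"
    and v: "\<forall>x\<in>\<Union>N. (v, x) \<in> (edge_rel N)\<^sup>*"
    and cover: "\<forall>s\<in>set cs. \<exists>x\<in>\<Union>N. (s, x) \<in> (edge_rel (H - cycle_edges cs))\<^sup>*"
    and Ncyc: "\<forall>ds. is_cycle N ds \<longrightarrow> cycle_edges ds = K"
    and card_N: "length cs \<le> card N"
  shows "spanning_cactus V G (H - cycle_edges cs \<union> N)" "card H \<le> card (H - cycle_edges cs \<union> N)"
    "\<forall>ds. is_cycle (H - cycle_edges cs \<union> N) ds \<longrightarrow>
       cycle_edges ds \<subseteq> H - cycle_edges cs \<or> cycle_edges ds = K"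
proof -
  let ?A = "H - cycle_edges cs"
  have HG: "H \<subseteq> G" and sH: "simple_graph V H" and conH: "connected_graph V H"
    and uniq: "unique_cycle_per_edge H"
    using sc unfolding spanning_cactus_def cactus_iff by auto
  have disj: "?A \<inter> N = {}"
  proof (rule ccontr)
    assume "?A \<inter> N \<noteq> {}"
    then obtain e where e: "e \<in> ?A" "e \<in> N" by blast
    then obtain x y where xy: "e = {x, y}" "x \<noteq> y" using NG sg unfolding simple_graph_def by blast
    then have "(x, y) \<in> (edge_rel ?A)\<^sup>*" using e(1) by auto
    moreover have "x \<in> \<Union>N" "y \<in> \<Union>N" using e(2) xy(1) by blast+
    ultimately show False using sep xy(2) by blast
  qed
  have sub: "?A \<union> N \<subseteq> G" using HG NG by blast
  then have "simple_graph V (?A \<union> N)" by (rule simple_graph_mono[OF sg])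
  moreover have "connected_graph V (?A \<union> N)" by (rule connected_replace_cycle[OF sH conH cyc v cover])
  moreover have "unique_cycle_per_edge (?A \<union> N)"
    using unique_cycle_per_edge_separated_union[OF _ disj sep Ncyc] unique_cycle_per_edge_mono[OF uniq]
    by blast
  ultimately show "spanning_cactus V G (?A \<union> N)"
    unfolding spanning_cactus_def cactus_iff using sub by blast
  have "finite H" "finite N"
    using simple_graph_finite_edges[OF sg] HG NG finite_subset by blast+
  then show "card H \<le> card (?A \<union> N)" using card_replace_cycle[OF _ cyc] disj card_N by blast
  show "\<forall>ds. is_cycle (?A \<union> N) ds \<longrightarrow> cycle_edges ds \<subseteq> ?A \<or> cycle_edges ds = K"
  proof (intro allI impI)
    fix ds assume ds: "is_cycle (?A \<union> N) ds"
    then have "is_cycle N ds" if "cycle_edges ds \<subseteq> N" using that by (simp add: is_cycle_iff_edges)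
    then show "cycle_edges ds \<subseteq> ?A \<or> cycle_edges ds = K"
      using cycle_in_separated_union[OF sep ds] Ncyc by blast
  qed
qed

lemma cycle_in_pendant_extension:
  assumes RK: "R \<inter> \<Union>K = {}" and h: "\<forall>s\<in>R. h s \<in> \<Union>K"
    and cyc: "is_cycle (K \<union> (\<lambda>s. {h s, s}) ` R) ds"
  shows "is_cycle K ds"
proof -
  let ?N = "K \<union> (\<lambda>s. {h s, s}) ` R"
  have unique_neighbour: "y = h s" if s: "s \<in> R" and sy: "{s, y} \<in> ?N" for s y
  proof -
    have "{s, y} \<notin> K" using s RK by blast
    then obtain t where t: "t \<in> R" "{s, y} = {h t, t}" using sy by blast
    moreover have "s \<noteq> h t" using s t(1) h RK by blast
    ultimately show ?thesis by (auto simp: doubleton_eq_iff)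
  qed
  have "set ds \<inter> R = {}"
  proof (rule ccontr)
    assume "set ds \<inter> R \<noteq> {}"
    then obtain s where s: "s \<in> set ds" "s \<in> R" by blast
    then show False
      using cycle_vertex_two_neighbours[OF cyc s(1)] unique_neighbour[OF s(2)] by metis
  qed
  then have "cycle_edges ds \<inter> (\<lambda>s. {h s, s}) ` R = {}"
    using Union_cycle_edges[of ds] by blast
  then show ?thesis using cyc by (auto simp: is_cycle_iff_edges)
qed

lemma card_pendant_extension:
  assumes RK: "R \<inter> \<Union>K = {}" and h: "\<forall>s\<in>R. h s \<in> \<Union>K" and fin: "finite K" "finite R"
  shows "card (K \<union> (\<lambda>s. {h s, s}) ` R) = card K + card R"
proof -
  have "inj_on (\<lambda>s. {h s, s}) R"
  proof
    fix s t assume st: "s \<in> R" "t \<in> R" "{h s, s} = {h t, t}"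
    have "s \<noteq> h t" using h st(1,2) RK by blast
    then show "s = t" using st(3) by (auto simp: doubleton_eq_iff)
  qed
  moreover have "K \<inter> (\<lambda>s. {h s, s}) ` R = {}" using RK by blast
  ultimately show ?thesis using fin by (simp add: card_Un_disjoint card_image)
qed

lemma length_le_card_pendant_cycle:
  assumes cs: "distinct cs" and ks: "distinct ks" "3 \<le> length ks" "v \<in> set ks"
    "set ks \<subseteq> insert v (set cs - {u})"
    and vu: "v \<in> set cs \<Longrightarrow> v = u" and h: "\<forall>s\<in>set cs - insert u (set ks). h s \<in> set ks"
  shows "length cs \<le> card (cycle_edges ks \<union> (\<lambda>s. {h s, s}) ` (set cs - insert u (set ks)))"
proof -
  let ?R = "set cs - insert u (set ks)"
  have "set cs \<inter> insert u (set ks) \<subseteq> insert u (set ks - {v})" using ks(4) vu by blast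
  then have "card (set cs \<inter> insert u (set ks)) \<le> card (insert u (set ks - {v}))"
    by (intro card_mono) auto
  also have "\<dots> \<le> length ks"
    using ks(2,3) by (intro card_insert_le_m1) (auto simp: card_Diff_singleton distinct_card[OF ks(1)])
  finally have "length cs \<le> card (cycle_edges ks) + card ?R"
    using card_cycle_edges[OF ks(1,2)] card_Diff_subset_Int[of "set cs" "insert u (set ks)"]
      distinct_card[OF cs] by simp
  also have "\<dots> = card (cycle_edges ks \<union> (\<lambda>s. {h s, s}) ` ?R)"
  proof (rule card_pendant_extension[symmetric])
    show "?R \<inter> \<Union>(cycle_edges ks) = {}" "\<forall>s\<in>?R. h s \<in> \<Union>(cycle_edges ks)"
      using h by (auto simp: Union_cycle_edges)
  qed (simp_all add: finite_cycle_edges)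
  finally show ?thesis .
qed

text \<open>The cycle \<open>cs\<close> is replaced by a new cycle \<open>ks\<close> on the vertices of \<open>cs\<close>, except that \<open>u\<close> may be
  traded for a vertex \<open>v\<close> hanging off \<open>u\<close>; every other vertex of \<open>cs\<close> becomes a leaf attached
  to \<open>ks\<close> by \<open>h\<close>.\<close>
lemma cactus_replace_cycle_by_pendant_cycle:
  assumes sg: "simple_graph V G" and sc: "spanning_cactus V G H" and cyc: "is_cycle H cs"
    and u: "u \<in> set cs" "(u, v) \<in> (edge_rel (H - cycle_edges cs))\<^sup>*"
    and ks: "is_cycle G ks" "v \<in> set ks" "set ks \<subseteq> insert v (set cs - {u})"
    and ks_unique: "\<forall>ds. is_cycle (cycle_edges ks) ds \<longrightarrow> cycle_edges ds = cycle_edges ks"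
    and h: "\<forall>s\<in>set cs - insert u (set ks). h s \<in> set ks \<and> {h s, s} \<in> G"
  defines "N \<equiv> cycle_edges ks \<union> (\<lambda>s. {h s, s}) ` (set cs - insert u (set ks))"
  shows "spanning_cactus V G (H - cycle_edges cs \<union> N)" "card H \<le> card (H - cycle_edges cs \<union> N)"
    "\<forall>ds. is_cycle (H - cycle_edges cs \<union> N) ds \<longrightarrow>
       cycle_edges ds \<subseteq> H - cycle_edges cs \<or> cycle_edges ds = cycle_edges ks"
proof -
  let ?A = "H - cycle_edges cs" and ?R = "set cs - insert u (set ks)" and ?K = "cycle_edges ks"
  have UK: "\<Union>?K = set ks" by (rule Union_cycle_edges)
  have RK: "?R \<inter> \<Union>?K = {}" and hK: "\<forall>s\<in>?R. h s \<in> \<Union>?K" using h UK by auto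
  have UN: "\<Union>N = set ks \<union> ?R" unfolding N_def using UK h by auto
  have dks: "distinct ks" "3 \<le> length ks" "?K \<subseteq> G" using ks(1) by (auto simp: is_cycle_iff_edges)
  have no_detour: "\<forall>s\<in>set cs. \<forall>t\<in>set cs. s \<noteq> t \<longrightarrow> (s, t) \<notin> (edge_rel ?A)\<^sup>*"
    using cycle_vertices_not_connected_outside[OF _ cyc] sc
    unfolding spanning_cactus_def cactus_iff by blast
  have NG: "N \<subseteq> G" unfolding N_def using dks(3) h by blast
  have "\<Union>N \<subseteq> insert v (set cs - {u})" unfolding UN using ks(3) by blast
  then have sep: "\<forall>x\<in>\<Union>N. \<forall>y\<in>\<Union>N. x \<noteq> y \<longrightarrow> (x, y) \<notin> (edge_rel ?A)\<^sup>*"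
    using separated_move_vertex[OF no_detour u] by blast
  have from_v: "\<forall>x\<in>\<Union>N. (v, x) \<in> (edge_rel N)\<^sup>*"
  proof
    fix x assume "x \<in> \<Union>N"
    have in_ks: "(v, y) \<in> (edge_rel N)\<^sup>*" if "y \<in> set ks" for y
      using edge_rel_rtrancl_mono[OF cycle_vertices_connected[OF ks(2) that]] unfolding N_def by blast
    show "(v, x) \<in> (edge_rel N)\<^sup>*"
    proof (cases "x \<in> set ks")
      case False
      then have "x \<in> ?R" using \<open>x \<in> \<Union>N\<close> UN by blast
      then have "(h x, x) \<in> edge_rel N" "h x \<in> set ks" unfolding N_def using h by auto
      then show ?thesis using in_ks by (meson rtrancl.rtrancl_into_rtrancl)
    qed (rule in_ks)
  qed
  have cover: "\<forall>s\<in>set cs. \<exists>x\<in>\<Union>N. (s, x) \<in> (edge_rel ?A)\<^sup>*"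
    using UN ks(2) u(2) by blast
  have Ncyc: "\<forall>ds. is_cycle N ds \<longrightarrow> cycle_edges ds = ?K"
    using cycle_in_pendant_extension[OF RK hK] ks_unique unfolding N_def by blast
  have "v = u" if "v \<in> set cs"
    using bspec[OF bspec[OF no_detour u(1)] that] u(2) by blast
  moreover have "distinct cs" using cyc by (simp add: is_cycle_iff_edges)
  ultimately have card_N: "length cs \<le> card N"
    unfolding N_def using length_le_card_pendant_cycle[of cs ks v u h] dks ks(2,3) h by blast
  show "spanning_cactus V G (?A \<union> N)" "card H \<le> card (?A \<union> N)"
    "\<forall>ds. is_cycle (?A \<union> N) ds \<longrightarrow> cycle_edges ds \<subseteq> ?A \<or> cycle_edges ds = ?K"
    using cactus_replace_cycle[OF sg sc cyc NG sep from_v cover Ncyc card_N] by blast+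
qed

definition crossing_short_cycle :: "'a set \<Rightarrow> 'a set \<Rightarrow> 'a list \<Rightarrow> bool" where
  "crossing_short_cycle V1 V2 cs \<longleftrightarrow>
     (length cs = 3 \<or> length cs = 4) \<and> set cs \<inter> V1 \<noteq> {} \<and> set cs \<inter> V2 \<noteq> {}"

definition bad_cycles :: "'a set \<Rightarrow> 'a set \<Rightarrow> 'a set set \<Rightarrow> 'a set set set" where
  "bad_cycles V1 V2 H = {cycle_edges cs | cs. is_cycle H cs \<and> \<not> crossing_short_cycle V1 V2 cs}"

lemma crossing_short_cycle_swap: "crossing_short_cycle V2 V1 cs = crossing_short_cycle V1 V2 cs"
  unfolding crossing_short_cycle_def by auto

lemma bad_cycles_swap: "bad_cycles V2 V1 H = bad_cycles V1 V2 H"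
  unfolding bad_cycles_def by (simp only: crossing_short_cycle_swap)

lemma finite_bad_cycles: "finite H \<Longrightarrow> finite (bad_cycles V1 V2 H)"
  unfolding bad_cycles_def is_cycle_iff_edges
  by (rule finite_subset[of _ "Pow H"]) auto

lemma bad_cycles_psubset_replace:
  assumes cyc: "is_cycle H cs" and bad: "\<not> crossing_short_cycle V1 V2 cs"
    and ks: "is_cycle G ks" "crossing_short_cycle V1 V2 ks"
    and H': "\<forall>ds. is_cycle H' ds \<longrightarrow> cycle_edges ds \<subseteq> H - cycle_edges cs \<or> cycle_edges ds = cycle_edges ks"
  shows "bad_cycles V1 V2 H' \<subset> bad_cycles V1 V2 H"
proof -
  have "X \<in> bad_cycles V1 V2 H - {cycle_edges cs}" if X: "X \<in> bad_cycles V1 V2 H'" for X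
  proof -
    obtain ds where ds: "X = cycle_edges ds" "is_cycle H' ds" "\<not> crossing_short_cycle V1 V2 ds"
      using X unfolding bad_cycles_def by blast
    have "cycle_edges ds \<noteq> cycle_edges ks"
    proof
      assume "cycle_edges ds = cycle_edges ks"
      then have "length ds = length ks" "set ds = set ks"
        using ks(1) ds(2) card_cycle_edges Union_cycle_edges by (metis is_cycle_iff_edges)+
      then show False using ds(3) ks(2) unfolding crossing_short_cycle_def by simp
    qed
    then have "cycle_edges ds \<subseteq> H - cycle_edges cs" using H' ds(2) by blast
    moreover have "cycle_edges ds \<noteq> {}"
      using ds(2) card_cycle_edges[of ds] by (auto simp: is_cycle_iff_edges)
    ultimately show ?thesis using ds unfolding bad_cycles_def by (auto simp: is_cycle_iff_edges)
  qed
  moreover have "cycle_edges cs \<in> bad_cycles V1 V2 H" using cyc bad unfolding bad_cycles_def by blast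
  ultimately show ?thesis by blast
qed

lemma improve_by_pendant_cycle:
  assumes sg: "simple_graph V G" and sc: "spanning_cactus V G H" and cyc: "is_cycle H cs"
    and bad: "\<not> crossing_short_cycle V1 V2 cs"
    and u: "u \<in> set cs" "(u, v) \<in> (edge_rel (H - cycle_edges cs))\<^sup>*"
    and ks: "is_cycle G ks" "v \<in> set ks" "set ks \<subseteq> insert v (set cs - {u})"
      "crossing_short_cycle V1 V2 ks"
    and ks_unique: "\<forall>ds. is_cycle (cycle_edges ks) ds \<longrightarrow> cycle_edges ds = cycle_edges ks"
    and h: "\<forall>s\<in>set cs - insert u (set ks). h s \<in> set ks \<and> {h s, s} \<in> G"
  shows "\<exists>H'. spanning_cactus V G H' \<and> card H \<le> card H' \<and> bad_cycles V1 V2 H' \<subset> bad_cycles V1 V2 H"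
  using cactus_replace_cycle_by_pendant_cycle[OF sg sc cyc u ks(1-3) ks_unique h]
    bad_cycles_psubset_replace[OF cyc bad ks(1,4)] by blast

locale complete_bipartite_supergraph =
  fixes V1 V2 :: "'a set" and G :: "'a set set"
  assumes simple: "simple_graph (V1 \<union> V2) G"
    and disjoint: "V1 \<inter> V2 = {}"
    and nonempty: "V1 \<noteq> {}" "V2 \<noteq> {}"
    and cross_edge: "x \<in> V1 \<Longrightarrow> y \<in> V2 \<Longrightarrow> {x, y} \<in> G"

lemma complete_bipartite_supergraph_swap:
  assumes "complete_bipartite_supergraph V1 V2 G"
  shows "complete_bipartite_supergraph V2 V1 G"
proof -
  interpret complete_bipartite_supergraph V1 V2 G by (rule assms)
  show ?thesis
  proof
    show "{x, y} \<in> G" if "x \<in> V2" "y \<in> V1" for x y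
      using cross_edge[OF that(2,1)] by (simp add: insert_commute)
  qed (use simple disjoint nonempty in \<open>auto simp: Un_commute\<close>)
qed

context complete_bipartite_supergraph
begin

lemma cross_edge_sides:
  assumes "x \<in> V1 \<union> V2" "y \<in> V1 \<union> V2" "(x \<in> V1) \<noteq> (y \<in> V1)"
  shows "{x, y} \<in> G"
  using assms cross_edge[of x y] cross_edge[of y x] by (auto simp: insert_commute)

lemma improve_by_triangle:
  assumes sc: "spanning_cactus (V1 \<union> V2) G H" and cyc: "is_cycle H cs"
    and bad: "\<not> crossing_short_cycle V1 V2 cs"
    and s0: "s0 \<in> set cs" "(s0, v) \<in> (edge_rel (H - cycle_edges cs))\<^sup>*" and v: "v \<in> V2"
    and s12: "{s1, s2} \<in> cycle_edges cs" "s1 \<in> V1" "s2 \<in> V1" "s1 \<noteq> s0" "s2 \<noteq> s0"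
  shows "\<exists>H'. spanning_cactus (V1 \<union> V2) G H' \<and> card H \<le> card H' \<and>
    bad_cycles V1 V2 H' \<subset> bad_cycles V1 V2 H"
proof -
  have HG: "H \<subseteq> G" and sH: "simple_graph (V1 \<union> V2) H"
    using sc unfolding spanning_cactus_def cactus_iff by auto
  have S: "set cs \<subseteq> V1 \<union> V2" by (rule cycle_vertices_subset[OF sH cyc])
  have "s1 \<noteq> s2 \<and> s1 \<in> set cs \<and> s2 \<in> set cs"
    using cyc cycle_edge_endpoints[OF s12(1)] by (simp add: is_cycle_iff_edges)
  moreover have "v \<noteq> s1" "v \<noteq> s2" using v s12(2,3) disjoint by auto
  moreover have "{s1, s2} \<in> G" using s12(1) cyc HG by (auto simp: is_cycle_iff_edges)
  ultimately have ks: "is_cycle G [v, s1, s2]"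
    using cross_edge[OF s12(2) v] cross_edge[OF s12(3) v]
    by (auto simp: is_cycle_iff_edges cycle_edges_triangle insert_commute)
  show ?thesis
  proof (rule improve_by_pendant_cycle[OF simple sc cyc bad s0 ks, where h = "\<lambda>s. if s \<in> V1 then v else s1"])
    show "set [v, s1, s2] \<subseteq> insert v (set cs - {s0})" using \<open>s1 \<noteq> s2 \<and> s1 \<in> set cs \<and> s2 \<in> set cs\<close> s12 by auto
    show "crossing_short_cycle V1 V2 [v, s1, s2]"
      using v s12(2) unfolding crossing_short_cycle_def by auto
    show "\<forall>ds. is_cycle (cycle_edges [v, s1, s2]) ds \<longrightarrow> cycle_edges ds = cycle_edges [v, s1, s2]"
    proof (intro allI impI)
      fix ds assume "is_cycle (cycle_edges [v, s1, s2]) ds"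
      then show "cycle_edges ds = cycle_edges [v, s1, s2]"
        using ks by (intro cycle_in_cycle_edges) (auto simp: is_cycle_iff_edges)
    qed
    show "\<forall>s\<in>set cs - insert s0 (set [v, s1, s2]).
        (if s \<in> V1 then v else s1) \<in> set [v, s1, s2] \<and> {if s \<in> V1 then v else s1, s} \<in> G"
      using S cross_edge[OF _ v] cross_edge[OF s12(2)] by (auto simp: insert_commute)
  qed simp
qed

lemma improve_by_square:
  assumes sc: "spanning_cactus (V1 \<union> V2) G H" and cyc: "is_cycle H cs"
    and bad: "\<not> crossing_short_cycle V1 V2 cs"
    and crossing: "\<forall>p q. {p, q} \<in> cycle_edges cs \<longrightarrow> (p \<in> V1) \<noteq> (q \<in> V1)"
    and long: "4 \<le> length cs"
  shows "\<exists>H'. spanning_cactus (V1 \<union> V2) G H' \<and> card H \<le> card H' \<and>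
    bad_cycles V1 V2 H' \<subset> bad_cycles V1 V2 H"
proof -
  have HG: "H \<subseteq> G" and sH: "simple_graph (V1 \<union> V2) H"
    using sc unfolding spanning_cactus_def cactus_iff by auto
  have S: "set cs \<subseteq> V1 \<union> V2" by (rule cycle_vertices_subset[OF sH cyc])
  obtain a b c d rest where cs: "cs = a # b # c # d # rest" using long
    by (cases cs; cases "tl cs"; cases "tl (tl cs)"; cases "tl (tl (tl cs))") auto
  let ?ks = "[a, b, c, d]"
  have path: "{a, b} \<in> cycle_edges cs" "{b, c} \<in> cycle_edges cs" "{c, d} \<in> cycle_edges cs"
    using nth_edge_in_cycle_edges[of 0 cs] nth_edge_in_cycle_edges[of 1 cs]
      nth_edge_in_cycle_edges[of 2 cs] by (simp_all add: cs numeral_2_eq_2)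
  then have sides: "(a \<in> V1) \<noteq> (b \<in> V1)" "(b \<in> V1) \<noteq> (c \<in> V1)" "(c \<in> V1) \<noteq> (d \<in> V1)"
    using crossing by blast+
  have abcd: "a \<in> V1 \<union> V2" "b \<in> V1 \<union> V2" "c \<in> V1 \<union> V2" "d \<in> V1 \<union> V2" using S cs by auto
  have "distinct ?ks" using cyc by (auto simp: is_cycle_iff_edges cs)
  moreover have "{d, a} \<in> G" using cross_edge_sides abcd sides by blast
  ultimately have ks: "is_cycle G ?ks"
    using path cyc HG by (auto simp: is_cycle_iff_edges cycle_edges_square)
  have ks_crossing: "\<forall>p q. {p, q} \<in> cycle_edges ?ks \<longrightarrow> (p \<in> V1) \<noteq> (q \<in> V1)"
    using sides by (auto simp: cycle_edges_square doubleton_eq_iff)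
  show ?thesis
  proof (rule improve_by_pendant_cycle[OF simple sc cyc bad _ _ ks,
        where u = a and v = a and h = "\<lambda>s. if (s \<in> V1) = (a \<in> V1) then b else a"])
    show "crossing_short_cycle V1 V2 ?ks"
      using sides abcd unfolding crossing_short_cycle_def by auto
    show "\<forall>ds. is_cycle (cycle_edges ?ks) ds \<longrightarrow> cycle_edges ds = cycle_edges ?ks"
    proof (intro allI impI)
      fix ds assume ds: "is_cycle (cycle_edges ?ks) ds"
      then have "length ?ks \<le> length ds"
        using crossing_cycle_not_triangle[OF ks_crossing ds] by (auto simp: is_cycle_iff_edges)
      then show "cycle_edges ds = cycle_edges ?ks"
        using ds ks by (intro cycle_in_cycle_edges) (auto simp: is_cycle_iff_edges)
    qed
    show "\<forall>s\<in>set cs - insert a (set ?ks).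
        (if (s \<in> V1) = (a \<in> V1) then b else a) \<in> set ?ks \<and> {if (s \<in> V1) = (a \<in> V1) then b else a, s} \<in> G"
      using S abcd sides cross_edge_sides by auto
  qed (auto simp: cs)
qed

lemma improve_by_inner_edge:
  assumes sc: "spanning_cactus (V1 \<union> V2) G H" and cyc: "is_cycle H cs"
    and bad: "\<not> crossing_short_cycle V1 V2 cs"
    and e: "{s1, s2} \<in> cycle_edges cs" "s1 \<in> V1" "s2 \<in> V1"
  shows "\<exists>H'. spanning_cactus (V1 \<union> V2) G H' \<and> card H \<le> card H' \<and>
    bad_cycles V1 V2 H' \<subset> bad_cycles V1 V2 H"
proof (cases "set cs \<inter> V2 = {}")
  case False
  then obtain v where v: "v \<in> set cs" "v \<in> V2" by blast
  then have "s1 \<noteq> v" "s2 \<noteq> v" using e(2,3) disjoint by auto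
  then show ?thesis using improve_by_triangle[OF sc cyc bad v(1) _ v(2) e] by simp
next
  case True
  have sH: "simple_graph (V1 \<union> V2) H" and conH: "connected_graph (V1 \<union> V2) H"
    using sc unfolding spanning_cactus_def cactus_iff by auto
  have dc: "distinct cs" "3 \<le> length cs" using cyc by (auto simp: is_cycle_iff_edges)
  have S: "set cs \<subseteq> V1" using True cycle_vertices_subset[OF sH cyc] by blast
  obtain v where v: "v \<in> V2" using nonempty by blast
  have c0: "hd cs \<in> set cs" using dc(2) by (cases cs) auto
  then have "(hd cs, v) \<in> (edge_rel H)\<^sup>*" using conH S v unfolding connected_graph_def by blast
  then have "\<exists>s\<in>set cs. (s, v) \<in> (edge_rel (H - cycle_edges cs))\<^sup>*"
    using c0 by (rule reachable_avoiding_cycle_edges)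
  then obtain s0 where s0: "s0 \<in> set cs" "(s0, v) \<in> (edge_rel (H - cycle_edges cs))\<^sup>*" by blast
  obtain n where "hd (rotate n cs) = s0" using ex_rotate_hd[OF s0(1)] by blast
  moreover have r: "distinct (rotate n cs)" "3 \<le> length (rotate n cs)" using dc by simp_all
  ultimately obtain x y rest where rot: "rotate n cs = s0 # x # y # rest"
    by (cases "rotate n cs"; cases "tl (rotate n cs)"; cases "tl (tl (rotate n cs))") auto
  have "{x, y} \<in> cycle_edges cs"
    using nth_edge_in_cycle_edges[of 1 "rotate n cs"] by (simp add: rot flip: cycle_edges_rotate[of n cs])
  moreover have "x \<in> set cs" "y \<in> set cs" "x \<noteq> s0" "y \<noteq> s0"
    using r(1) set_rotate[of n cs] by (auto simp: rot)
  ultimately show ?thesis using improve_by_triangle[OF sc cyc bad s0 v] S by blast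
qed

lemma ex_improvement:
  assumes sc: "spanning_cactus (V1 \<union> V2) G H" and bad: "bad_cycles V1 V2 H \<noteq> {}"
  shows "\<exists>H'. spanning_cactus (V1 \<union> V2) G H' \<and> card H \<le> card H' \<and>
    bad_cycles V1 V2 H' \<subset> bad_cycles V1 V2 H"
proof -
  obtain cs where cyc: "is_cycle H cs" and bad: "\<not> crossing_short_cycle V1 V2 cs"
    using bad unfolding bad_cycles_def by blast
  have sH: "simple_graph (V1 \<union> V2) H" using sc unfolding spanning_cactus_def cactus_iff by auto
  have dc: "distinct cs" "3 \<le> length cs" using cyc by (auto simp: is_cycle_iff_edges)
  have S: "set cs \<subseteq> V1 \<union> V2" by (rule cycle_vertices_subset[OF sH cyc])
  consider (inner1) s1 s2 where "{s1, s2} \<in> cycle_edges cs" "s1 \<in> V1" "s2 \<in> V1"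
    | (inner2) s1 s2 where "{s1, s2} \<in> cycle_edges cs" "s1 \<in> V2" "s2 \<in> V2"
    | (crossing) "\<forall>p q. {p, q} \<in> cycle_edges cs \<longrightarrow> (p \<in> V1) \<noteq> (q \<in> V1)"
    using S cycle_edge_endpoints[OF _ dc] by blast
  then show ?thesis
  proof cases
    case inner1
    then show ?thesis using improve_by_inner_edge[OF sc cyc bad] by blast
  next
    case inner2
    have "complete_bipartite_supergraph V2 V1 G" by (rule complete_bipartite_supergraph_swap) unfold_locales
    then show ?thesis
      using complete_bipartite_supergraph.improve_by_inner_edge[of V2 V1 G H cs] sc cyc bad inner2
      by (simp add: Un_commute crossing_short_cycle_swap bad_cycles_swap)
  next
    case crossing
    have "is_cycle (cycle_edges cs) cs" using dc by (simp add: is_cycle_iff_edges)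
    then have "length cs \<noteq> 3" using crossing_cycle_not_triangle[OF crossing] by blast
    then show ?thesis using improve_by_square[OF sc cyc bad crossing] dc(2) by simp
  qed
qed

lemma ex_spanning_cactus_without_bad_cycles:
  "spanning_cactus (V1 \<union> V2) G H \<Longrightarrow>
    \<exists>H'. spanning_cactus (V1 \<union> V2) G H' \<and> card H \<le> card H' \<and> bad_cycles V1 V2 H' = {}"
proof (induction "card (bad_cycles V1 V2 H)" arbitrary: H rule: less_induct)
  case less
  show ?case
  proof (cases "bad_cycles V1 V2 H = {}")
    case False
    then obtain H1 where H1: "spanning_cactus (V1 \<union> V2) G H1" "card H \<le> card H1"
      "bad_cycles V1 V2 H1 \<subset> bad_cycles V1 V2 H"
      using ex_improvement[OF less.prems] by blast
    have "finite H" using less.prems simple_graph_finite_edges[OF simple] finite_subset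
      unfolding spanning_cactus_def by blast
    then have "card (bad_cycles V1 V2 H1) < card (bad_cycles V1 V2 H)"
      using H1(3) finite_bad_cycles psubset_card_mono by blast
    then show ?thesis using less.hyps[OF _ H1(1)] H1(2) le_trans by blast
  qed (use less.prems in blast)
qed

lemma ex_spanning_cactus: "\<exists>H. spanning_cactus (V1 \<union> V2) G H"
proof -
  obtain u w where u: "u \<in> V1" and w: "w \<in> V2" using nonempty by blast
  let ?R = "V1 \<union> V2 - {u, w}" and ?h = "\<lambda>s. if s \<in> V1 then w else u"
  text \<open>A double star: the edge \<open>uw\<close>, with every other vertex a leaf at \<open>u\<close> or \<open>w\<close>.\<close>
  define T where "T = {{u, w}} \<union> (\<lambda>s. {?h s, s}) ` ?R"
  have "{?h s, s} \<in> G" if "s \<in> V1 \<union> V2" for s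
    using that u w disjoint by (intro cross_edge_sides) auto
  then have TG: "T \<subseteq> G" unfolding T_def using cross_edge[OF u w] by auto
  have from_u: "(u, s) \<in> (edge_rel T)\<^sup>*" if "s \<in> V1 \<union> V2" for s
  proof -
    have uw: "(u, w) \<in> (edge_rel T)\<^sup>*" unfolding T_def by (intro r_into_rtrancl) simp
    show ?thesis
    proof (cases "s \<in> {u, w}")
      case False
      have "(u, ?h s) \<in> (edge_rel T)\<^sup>*" using uw by simp
      moreover have "(?h s, s) \<in> edge_rel T" unfolding T_def using False that by blast
      ultimately show ?thesis by (rule rtrancl_into_rtrancl)
    qed (use uw in \<open>cases "s = u"; simp\<close>)
  qed
  have connected: "connected_graph (V1 \<union> V2) T"
    unfolding connected_graph_def
  proof (intro conjI ballI)
    show "V1 \<union> V2 \<noteq> {}" using u by blast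
    fix a b assume "a \<in> V1 \<union> V2" "b \<in> V1 \<union> V2"
    from edge_rel_rtrancl_sym[OF from_u[OF this(1)]] from_u[OF this(2)]
    show "(a, b) \<in> (edge_rel T)\<^sup>*" by (rule rtrancl_trans)
  qed
  have no_cycle: "\<not> is_cycle T ds" for ds
  proof
    assume "is_cycle T ds"
    then have "is_cycle {{u, w}} ds" unfolding T_def by (rule cycle_in_pendant_extension[rotated 2]) auto
    then have "set ds \<subseteq> {u, w}" "distinct ds" "3 \<le> length ds"
      using Union_cycle_edges[of ds] by (auto simp: is_cycle_iff_edges)
    then have "length ds \<le> card {u, w}" using card_mono[of "{u, w}" "set ds"] distinct_card by fastforce
    also have "\<dots> \<le> 2" by (simp add: card_insert_le_m1)
    finally show False using \<open>3 \<le> length ds\<close> by simp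
  qed
  then have "unique_cycle_per_edge T" by (simp add: unique_cycle_per_edge_def)
  then have "spanning_cactus (V1 \<union> V2) G T"
    unfolding spanning_cactus_def cactus_iff using TG simple_graph_mono[OF simple TG] connected by blast
  then show ?thesis by blast
qed

lemma ex_max_spanning_cactus_without_bad_cycles:
  "\<exists>H. spanning_cactus (V1 \<union> V2) G H \<and>
    (\<forall>H'. spanning_cactus (V1 \<union> V2) G H' \<longrightarrow> card H' \<le> card H) \<and> bad_cycles V1 V2 H = {}"
proof -
  let ?SC = "{H. spanning_cactus (V1 \<union> V2) G H}"
  have "?SC \<subseteq> Pow G" unfolding spanning_cactus_def by blast
  then have fin: "finite (card ` ?SC)"
    using simple_graph_finite_edges[OF simple] by (meson finite_Pow_iff finite_subset finite_imageI)
  have "Max (card ` ?SC) \<in> card ` ?SC" by (rule Max_in[OF fin]) (use ex_spanning_cactus in auto)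
  then obtain H0 where H0: "spanning_cactus (V1 \<union> V2) G H0" "card H0 = Max (card ` ?SC)" by auto
  obtain H where H: "spanning_cactus (V1 \<union> V2) G H" "card H0 \<le> card H" "bad_cycles V1 V2 H = {}"
    using ex_spanning_cactus_without_bad_cycles[OF H0(1)] by blast
  have "card H' \<le> card H" if "spanning_cactus (V1 \<union> V2) G H'" for H'
    using Max_ge[OF \<open>finite (card ` ?SC)\<close>, of "card H'"] that H0(2) H(2) by simp
  then show ?thesis using H(1,3) by blast
qed

end

lemma simple_graph_join_edges:
  assumes "simple_graph V1 E1" "simple_graph V2 E2" "V1 \<inter> V2 = {}"
  shows "simple_graph (V1 \<union> V2) (join_edges V1 E1 V2 E2)"
  unfolding simple_graph_def
proof (intro conjI ballI)
  show "finite (V1 \<union> V2)" using assms(1,2) unfolding simple_graph_def by simp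
  fix e assume "e \<in> join_edges V1 E1 V2 E2"
  then consider "e \<in> E1" | "e \<in> E2" | u v where "e = {u, v}" "u \<in> V1" "v \<in> V2"
    unfolding join_edges_def by blast
  then show "\<exists>u v. e = {u, v} \<and> u \<noteq> v \<and> u \<in> V1 \<union> V2 \<and> v \<in> V1 \<union> V2"
  proof cases
    case 1
    then obtain u v where "e = {u, v}" "u \<noteq> v" "u \<in> V1" "v \<in> V1"
      using assms(1) unfolding simple_graph_def by blast
    then show ?thesis by blast
  next
    case 2
    then obtain u v where "e = {u, v}" "u \<noteq> v" "u \<in> V2" "v \<in> V2"
      using assms(2) unfolding simple_graph_def by blast
    then show ?thesis by blast
  next
    case 3
    then show ?thesis using assms(3) by blast
  qed
qed

theorem mainTheorem11:
  fixes V1 V2 :: "'a set" and E1 E2 :: "'a set set"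
  assumes "simple_graph V1 E1" and "simple_graph V2 E2"
    and "V1 \<inter> V2 = {}" and "V1 \<noteq> {}" and "V2 \<noteq> {}"
    and "cograph (V1 \<union> V2) (join_edges V1 E1 V2 E2)"
  shows "\<exists>H. spanning_cactus (V1 \<union> V2) (join_edges V1 E1 V2 E2) H \<and>
    (\<forall>H'. spanning_cactus (V1 \<union> V2) (join_edges V1 E1 V2 E2) H' \<longrightarrow> card H' \<le> card H) \<and>
    (\<forall>cs. is_cycle H cs \<longrightarrow> (length cs = 3 \<or> length cs = 4) \<and>
        set cs \<inter> V1 \<noteq> {} \<and> set cs \<inter> V2 \<noteq> {})"
proof -
  interpret complete_bipartite_supergraph V1 V2 "join_edges V1 E1 V2 E2"
  proof
    show "{x, y} \<in> join_edges V1 E1 V2 E2" if "x \<in> V1" "y \<in> V2" for x y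
      using that unfolding join_edges_def by blast
  qed (use assms(3-5) simple_graph_join_edges[OF assms(1-3)] in auto)
  obtain H where H: "spanning_cactus (V1 \<union> V2) (join_edges V1 E1 V2 E2) H"
    "\<forall>H'. spanning_cactus (V1 \<union> V2) (join_edges V1 E1 V2 E2) H' \<longrightarrow> card H' \<le> card H"
    "bad_cycles V1 V2 H = {}"
    using ex_max_spanning_cactus_without_bad_cycles by blast
  have "\<forall>cs. is_cycle H cs \<longrightarrow> crossing_short_cycle V1 V2 cs"
    using H(3) unfolding bad_cycles_def by blast
  then show ?thesis using H(1,2) unfolding crossing_short_cycle_def by blast
qed

end
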